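(* Let $X_1,\ldots,X_N$ be independent random vectors in $\mathbb R^n$ and let $\psi>0$ be such that $\sup_{i\le N}\sup_{y\in S^{n-1}}\|\langle X_i,y\rangle\|_{\psi_1}\le\psi$. Let $m\le N$, $\varepsilon,\alpha\in(0,1]$ and $L\ge 2m\log\frac{12eN}{m\varepsilon}$. Then $$\mathbb P\Big(\sup_{F\subset\{1,\ldots,N\},\,|F|\le m}\ \sup_{E\subset F}\ \sup_{z\in\mathcal N(F,\varepsilon,\alpha)}\ \sum_{i\in E}\Big|\Big\langle z_iX_i,\sum_{j\in F\setminus E}z_jX_j\Big\rangle\Big|>\psi\,\alpha LA_m\Big)\le e^{-L/2}.$$
   Context: For a random variable $Y$, $\|Y\|_{\psi_1}=\inf\{C>0:\mathbb E\exp(|Y|/C)\le 2\}$. $A$ denotes the random $n\times N$ matrix whose columns are $X_1,\ldots,X_N$, and for $1\le m\le N$, $A_m=\sup\{|Az|: z\in S^{N-1},\ |\mathrm{supp}\,z|\le m\}$ (Euclidean norms). For $E\subset\{1,\ldots,N\}$, $\mathbb R^E$ is the set of vectors in $\mathbb R^N$ supported in $E$. For $\varepsilon,\alpha\in(0,1]$, $\mathcal N(E,\varepsilon,\alpha)$ denotes a fixed $\varepsilon$-net (in the Euclidean metric) of $B_2^N\cap\alpha B_\infty^N\cap\mathbb R^E$ of cardinality at most $(3/\varepsilon)^{|E|}$; $z_i$ denotes the $i$-th coordinate of $z$. $\log$ is the natural logarithm. *)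

theory Defs
  imports "HOL-Probability.Probability"
begin

text \<open>psi_1 (Orlicz) norm; the infimum of the empty set is \<infinity>.\<close>
definition psi1_norm :: "'a measure \<Rightarrow> ('a \<Rightarrow> real) \<Rightarrow> ereal" where
  "psi1_norm M Y = Inf {ereal C | C. C > 0 \<and>
      (\<integral>\<^sup>+ x. ennreal (exp (\<bar>Y x\<bar> / C)) \<partial>M) \<le> 2}"

text \<open>Vectors of R^N are functions nat => real supported in {1..N}.
  Euclidean norm of a vector supported in a finite set I.\<close>
definition enorm_on :: "nat set \<Rightarrow> (nat \<Rightarrow> real) \<Rightarrow> real" where
  "enorm_on I z = sqrt (\<Sum>j\<in>I. (z j)\<^sup>2)"

definition ball_box :: "nat \<Rightarrow> real \<Rightarrow> nat set \<Rightarrow> (nat \<Rightarrow> real) set" where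
  "ball_box N \<alpha> E = {z. (\<forall>j. j \<notin> E \<longrightarrow> z j = 0) \<and> enorm_on {1..N} z \<le> 1 \<and> (\<forall>j. \<bar>z j\<bar> \<le> \<alpha>)}"

definition A_sparse :: "nat \<Rightarrow> (nat \<Rightarrow> 'a \<Rightarrow> real^'n) \<Rightarrow> nat \<Rightarrow> 'a \<Rightarrow> real" where
  "A_sparse N X m \<omega> = Sup {norm (\<Sum>j\<in>{1..N}. z j *\<^sub>R X j \<omega>) | z.
      (\<forall>j. j \<notin> {1..N} \<longrightarrow> z j = 0) \<and> enorm_on {1..N} z = 1 \<and>
      card {j\<in>{1..N}. z j \<noteq> 0} \<le> m}"

end

theory Submission
  imports Defs
begin

(* For a fixed support F (|F| <= m), a fixed split E of F and a fixed net
   point z, write Y = sum_{j in F-E} z_j X_j.  Conditionally on (X_j)_{j in F-E}, the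
   summands |<z_i X_i, Y>| with i in E are independent, and the psi_1 hypothesis gives
   E exp(|<z_i X_i, Y>| / (psi alpha |Y|)) <= 2.  Hence E exp(S / (psi alpha |Y|)) <= 2^|E|
   for the decoupled sum S, and by Markov P(S > psi alpha L |Y|) <= 2^|E| e^(-L).  Since the
   restriction of z to F-E is m-sparse of norm <= 1, |Y| <= A_m, so the event of the theorem
   lies in the union of these events.  A union bound over all (F, E, z) costs at most
   (eN/m)^m * 3^m * (3/eps)^m <= exp (L/2) factors, which yields exp (-L/2). *)

definition decoupled_sum ::
    "(nat \<Rightarrow> 'a \<Rightarrow> 'b::real_inner) \<Rightarrow> nat set \<Rightarrow> nat set \<Rightarrow> (nat \<Rightarrow> real) \<Rightarrow> 'a \<Rightarrow> real" where
  "decoupled_sum X F E z \<omega> = (\<Sum>i\<in>E. \<bar>(z i *\<^sub>R X i \<omega>) \<bullet> (\<Sum>j\<in>F - E. z j *\<^sub>R X j \<omega>)\<bar>)"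


subsection \<open>Exponential moments from the \<open>\<psi>\<^sub>1\<close> norm\<close>

text \<open>The infimum in the definition of the \<open>\<psi>\<^sub>1\<close> norm is attained: a bound
  \<open>\<parallel>Y\<parallel>\<^sub>\<psi>\<^sub>1 \<le> \<psi>\<close> gives \<open>E exp(|Y|/\<psi>) \<le> 2\<close> (monotone convergence along \<open>C \<down> \<psi>\<close>).\<close>

lemma psi1_norm_exp_moment:
  assumes Y_meas: "Y \<in> borel_measurable M" and Y_bd: "psi1_norm M Y \<le> ereal \<psi>" and psi: "\<psi> > 0"
  shows "(\<integral>\<^sup>+x. ennreal (exp (\<bar>Y x\<bar> / \<psi>)) \<partial>M) \<le> 2"
proof -
  have above: "(\<integral>\<^sup>+x. ennreal (exp (\<bar>Y x\<bar> / C)) \<partial>M) \<le> 2" if C: "C > \<psi>" for C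
  proof -
    have "psi1_norm M Y < ereal C" using Y_bd C by (simp add: order.strict_trans1)
    then obtain C' where C': "C' < C" "C' > 0" "(\<integral>\<^sup>+ x. ennreal (exp (\<bar>Y x\<bar> / C')) \<partial>M) \<le> 2"
      unfolding psi1_norm_def Inf_less_iff by auto
    have "(\<integral>\<^sup>+x. ennreal (exp (\<bar>Y x\<bar> / C)) \<partial>M) \<le> (\<integral>\<^sup>+x. ennreal (exp (\<bar>Y x\<bar> / C')) \<partial>M)"
      using C' by (intro nn_integral_mono ennreal_leI) (simp add: divide_left_mono)
    with C'(3) show ?thesis by simp
  qed
  define f where "f n x = ennreal (exp (\<bar>Y x\<bar> / (\<psi> + 1 / Suc n)))" for n x
  have inc: "incseq f"
    unfolding incseq_def le_fun_def f_def using psi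
    by (intro allI impI ennreal_leI) (auto simp: frac_le intro!: divide_left_mono mult_pos_pos add_pos_pos)
  have f_meas: "f n \<in> borel_measurable M" for n unfolding f_def using Y_meas by measurable
  have lim: "(SUP n. f n x) = ennreal (exp (\<bar>Y x\<bar> / \<psi>))" for x
  proof (rule LIMSEQ_unique)
    show "(\<lambda>n. f n x) \<longlonglongrightarrow> (SUP n. f n x)"
      using inc by (intro LIMSEQ_SUP) (auto simp: incseq_def le_fun_def)
    have "(\<lambda>n. \<psi> + 1 / real (Suc n)) \<longlonglongrightarrow> \<psi>"
      using LIMSEQ_inverse_real_of_nat_add[of \<psi>] by (simp add: inverse_eq_divide)
    then show "(\<lambda>n. f n x) \<longlonglongrightarrow> ennreal (exp (\<bar>Y x\<bar> / \<psi>))"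
      unfolding f_def using psi by (intro tendsto_ennrealI tendsto_intros) auto
  qed
  have "(\<integral>\<^sup>+x. ennreal (exp (\<bar>Y x\<bar> / \<psi>)) \<partial>M) = (\<integral>\<^sup>+x. (SUP n. f n x) \<partial>M)" by (simp add: lim)
  also have "\<dots> = (SUP n. integral\<^sup>N M (f n))"
    by (rule nn_integral_monotone_convergence_SUP[OF inc f_meas])
  also have "\<dots> \<le> 2" unfolding f_def using psi by (intro SUP_least above) simp
  finally show ?thesis .
qed

lemma scaled_projection_exp_moment:
  fixes X :: "'a \<Rightarrow> 'b::euclidean_space"
  assumes "prob_space M" and X_meas: "X \<in> borel_measurable M"
    and X_bd: "\<And>u. norm u = 1 \<Longrightarrow> psi1_norm M (\<lambda>\<omega>. X \<omega> \<bullet> u) \<le> ereal \<psi>"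
    and psi: "\<psi> > 0" and alpha: "\<alpha> > 0" and c: "\<bar>c\<bar> \<le> \<alpha>"
  shows "(\<integral>\<^sup>+\<omega>. ennreal (exp (\<bar>(c *\<^sub>R X \<omega>) \<bullet> y\<bar> / (\<psi> * \<alpha> * norm y))) \<partial>M) \<le> 2"
proof (cases "y = 0")
  case True
  interpret prob_space M by fact
  show ?thesis using True by (simp add: emeasure_space_1)
next
  case False
  define u where "u = y /\<^sub>R norm y"
  have u: "norm u = 1" using False by (simp add: u_def)
  have "(\<integral>\<^sup>+\<omega>. ennreal (exp (\<bar>(c *\<^sub>R X \<omega>) \<bullet> y\<bar> / (\<psi> * \<alpha> * norm y))) \<partial>M)
      \<le> (\<integral>\<^sup>+\<omega>. ennreal (exp (\<bar>X \<omega> \<bullet> u\<bar> / \<psi>)) \<partial>M)"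
  proof (intro nn_integral_mono ennreal_leI, subst exp_le_cancel_iff)
    fix \<omega>
    have y: "norm y > 0" using False by simp
    have "\<bar>(c *\<^sub>R X \<omega>) \<bullet> y\<bar> / (\<psi> * \<alpha> * norm y) = \<bar>c\<bar> * (\<bar>X \<omega> \<bullet> y\<bar> / (\<psi> * \<alpha> * norm y))"
      by (simp add: abs_mult)
    also have "\<dots> \<le> \<alpha> * (\<bar>X \<omega> \<bullet> y\<bar> / (\<psi> * \<alpha> * norm y))"
      using c psi alpha y by (intro mult_right_mono) auto
    also have "\<dots> = \<bar>X \<omega> \<bullet> u\<bar> / \<psi>"
      using alpha y psi by (simp add: u_def abs_mult field_simps)
    finally show "\<bar>(c *\<^sub>R X \<omega>) \<bullet> y\<bar> / (\<psi> * \<alpha> * norm y) \<le> \<bar>X \<omega> \<bullet> u\<bar> / \<psi>" .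
  qed
  also have "\<dots> \<le> 2"
    by (rule psi1_norm_exp_moment[OF _ X_bd[OF u] psi]) (use X_meas in measurable)
  finally show ?thesis .
qed


subsection \<open>Decoupling products of independent factors\<close>

text \<open>On a product of probability spaces over \<open>D \<union> E\<close>: if each factor \<open>k i (x i) y\<close>, \<open>i \<in> E\<close>,
  has integral at most \<open>c\<close> for every frozen \<open>y\<close>, and \<open>h\<close> only depends on the coordinates in
  \<open>D\<close>, then the product \<open>\<Prod>i\<in>E. k i (x i) (h x)\<close> integrates to at most \<open>c ^ |E|\<close>
  (Fubini over \<open>D\<close> and \<open>E\<close>, then independence of the coordinates in \<open>E\<close>).\<close>

lemma (in product_prob_space) nn_integral_decoupled_product_le:
  assumes DE: "D \<inter> E = {}" "finite D" "finite E"
    and g_meas: "(\<lambda>x. \<Prod>i\<in>E. k i (x i) (h x)) \<in> borel_measurable (\<Pi>\<^sub>M i\<in>D \<union> E. M i)"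
    and k_meas: "\<And>i y. i \<in> E \<Longrightarrow> (\<lambda>u. k i u y) \<in> borel_measurable (M i)"
    and h_dep: "\<And>x x'. (\<And>i. i \<in> D \<Longrightarrow> x i = x' i) \<Longrightarrow> h x = h x'"
    and k_bd: "\<And>i y. i \<in> E \<Longrightarrow> (\<integral>\<^sup>+u. k i u y \<partial>M i) \<le> c"
  shows "(\<integral>\<^sup>+x. (\<Prod>i\<in>E. k i (x i) (h x)) \<partial>(\<Pi>\<^sub>M i\<in>D \<union> E. M i)) \<le> c ^ card E"
proof -
  have inner: "(\<integral>\<^sup>+y. (\<Prod>i\<in>E. k i (merge D E (x, y) i) (h (merge D E (x, y)))) \<partial>(\<Pi>\<^sub>M i\<in>E. M i))
      \<le> c ^ card E" for x
  proof -
    have "h (merge D E (x, y)) = h x" for y by (rule h_dep) (simp add: merge_def)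
    moreover have "merge D E (x, y) i = y i" if "i \<in> E" for y i
      using that DE(1) by (auto simp: merge_def)
    ultimately have "(\<integral>\<^sup>+y. (\<Prod>i\<in>E. k i (merge D E (x, y) i) (h (merge D E (x, y)))) \<partial>(\<Pi>\<^sub>M i\<in>E. M i))
        = (\<integral>\<^sup>+y. (\<Prod>i\<in>E. k i (y i) (h x)) \<partial>(\<Pi>\<^sub>M i\<in>E. M i))"
      by (intro nn_integral_cong prod.cong) auto
    also have "\<dots> = (\<Prod>i\<in>E. \<integral>\<^sup>+u. k i u (h x) \<partial>M i)"
      by (rule product_nn_integral_prod[OF DE(3) k_meas])
    also have "\<dots> \<le> (\<Prod>i\<in>E. c)" by (intro prod_mono_ennreal k_bd)
    finally show ?thesis by simp
  qed
  interpret PD: prob_space "\<Pi>\<^sub>M i\<in>D. M i" by (intro prob_space_PiM prob_space)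
  have "(\<integral>\<^sup>+x. (\<Prod>i\<in>E. k i (x i) (h x)) \<partial>(\<Pi>\<^sub>M i\<in>D \<union> E. M i))
      = (\<integral>\<^sup>+x. (\<integral>\<^sup>+y. (\<Prod>i\<in>E. k i (merge D E (x, y) i) (h (merge D E (x, y)))) \<partial>(\<Pi>\<^sub>M i\<in>E. M i))
          \<partial>(\<Pi>\<^sub>M i\<in>D. M i))"
    by (rule product_nn_integral_fold[OF DE g_meas])
  also have "\<dots> \<le> (\<integral>\<^sup>+x. c ^ card E \<partial>(\<Pi>\<^sub>M i\<in>D. M i))" by (intro nn_integral_mono inner)
  also have "\<dots> = c ^ card E" by (simp add: PD.emeasure_space_1)
  finally show ?thesis .
qed

lemma (in prob_space) nn_integral_indep_vars_PiM:
  fixes X :: "'i \<Rightarrow> 'a \<Rightarrow> 'b::topological_space"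
  assumes indep: "indep_vars (\<lambda>_. borel) X F" and F_ne: "F \<noteq> {}"
    and g_meas: "g \<in> borel_measurable (\<Pi>\<^sub>M i\<in>F. borel)"
  shows "(\<integral>\<^sup>+\<omega>. g (\<lambda>i\<in>F. X i \<omega>) \<partial>M) = (\<integral>\<^sup>+x. g x \<partial>(\<Pi>\<^sub>M i\<in>F. distr M borel (X i)))"
proof -
  have X_meas: "X i \<in> borel_measurable M" if "i \<in> F" for i
    using indep that unfolding indep_vars_def by auto
  then have law: "distr M (\<Pi>\<^sub>M i\<in>F. borel) (\<lambda>\<omega>. \<lambda>i\<in>F. X i \<omega>) = (\<Pi>\<^sub>M i\<in>F. distr M borel (X i))"
    using indep indep_vars_iff_distr_eq_PiM'[OF F_ne, where M'="\<lambda>_. borel" and X=X] by simp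
  have "(\<lambda>\<omega>. \<lambda>i\<in>F. X i \<omega>) \<in> M \<rightarrow>\<^sub>M (\<Pi>\<^sub>M i\<in>F. borel)"
    using X_meas by (intro measurable_restrict) auto
  then show ?thesis using g_meas by (simp add: law[symmetric] nn_integral_distr)
qed

text \<open>The same decoupling inequality for independent random variables \<open>X i\<close>, \<open>i \<in> F\<close>: the joint
  law is the product of the marginals, with \<open>D = F - E\<close>.\<close>

lemma (in prob_space) indep_decoupled_product_le:
  fixes X :: "'i \<Rightarrow> 'a \<Rightarrow> 'b::second_countable_topology"
    and h :: "('i \<Rightarrow> 'b) \<Rightarrow> 'c::second_countable_topology"
  assumes indep: "indep_vars (\<lambda>_. borel) X F" and F: "finite F" "E \<subseteq> F"
    and k_meas: "\<And>i. i \<in> E \<Longrightarrow> case_prod (k i) \<in> borel_measurable (borel \<Otimes>\<^sub>M borel)"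
    and h_meas: "h \<in> borel_measurable (\<Pi>\<^sub>M i\<in>F. borel)"
    and h_dep: "\<And>x x'. (\<And>i. i \<in> F - E \<Longrightarrow> x i = x' i) \<Longrightarrow> h x = h x'"
    and k_bd: "\<And>i y. i \<in> E \<Longrightarrow> (\<integral>\<^sup>+\<omega>. k i (X i \<omega>) y \<partial>M) \<le> c"
  shows "(\<integral>\<^sup>+\<omega>. (\<Prod>i\<in>E. k i (X i \<omega>) (h (\<lambda>j\<in>F. X j \<omega>))) \<partial>M) \<le> c ^ card E"
proof (cases "F = {}")
  case True
  then show ?thesis using F by (simp add: emeasure_space_1)
next
  case F_ne: False
  define X' where "X' i = (if i \<in> F then X i else (\<lambda>_. undefined))" for i
  define Q where "Q i = distr M borel (X' i)" for i
  define g where "g x = (\<Prod>i\<in>E. k i (x i) (h x))" for x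
  have X'_meas: "X' i \<in> borel_measurable M" for i
    using indep unfolding indep_vars_def X'_def by auto
  have sets_Q: "sets (Q i) = sets borel" for i unfolding Q_def by simp
  have indep': "indep_vars (\<lambda>_. borel) X' F"
    using indep by (rule indep_vars_cong[THEN iffD1, rotated 3]) (auto simp: X'_def)
  have "(\<lambda>x. case_prod (k i) (x i, h x)) \<in> borel_measurable (\<Pi>\<^sub>M i\<in>F. borel)" if "i \<in> E" for i
    using that F(2)
    by (intro measurable_compose[OF measurable_Pair k_meas[OF that]] measurable_component_singleton h_meas)
      auto
  then have g_meas: "g \<in> borel_measurable (\<Pi>\<^sub>M i\<in>F. borel)"
    unfolding g_def by (intro borel_measurable_prod_ennreal) simp
  have F_split: "(F - E) \<union> E = F" using F(2) by blast
  have "(\<integral>\<^sup>+\<omega>. (\<Prod>i\<in>E. k i (X i \<omega>) (h (\<lambda>j\<in>F. X j \<omega>))) \<partial>M) = (\<integral>\<^sup>+\<omega>. g (\<lambda>i\<in>F. X' i \<omega>) \<partial>M)"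
  proof -
    have "(\<lambda>i\<in>F. X' i \<omega>) = (\<lambda>i\<in>F. X i \<omega>)" for \<omega> by (auto simp: X'_def)
    then show ?thesis unfolding g_def using F(2) by (intro nn_integral_cong prod.cong) auto
  qed
  also have "\<dots> = (\<integral>\<^sup>+x. g x \<partial>(\<Pi>\<^sub>M i\<in>F. Q i))"
    unfolding Q_def by (rule nn_integral_indep_vars_PiM[OF indep' F_ne g_meas])
  also have "\<dots> = (\<integral>\<^sup>+x. g x \<partial>(\<Pi>\<^sub>M i\<in>(F - E) \<union> E. Q i))" by (simp only: F_split)
  also have "\<dots> \<le> c ^ card E"
  proof -
    interpret Q: prob_space "Q i" for i unfolding Q_def by (rule prob_space_distr[OF X'_meas])
    interpret product_prob_space Q UNIV ..
    show ?thesis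
      unfolding g_def
    proof (rule nn_integral_decoupled_product_le)
      show "(\<lambda>x. \<Prod>i\<in>E. k i (x i) (h x)) \<in> borel_measurable (\<Pi>\<^sub>M i\<in>F - E \<union> E. Q i)"
        using g_meas unfolding g_def F_split
        by (simp add: measurable_cong_sets[OF sets_PiM_cong[OF refl sets_Q] refl])
      show "(\<lambda>u. k i u y) \<in> borel_measurable (Q i)" if "i \<in> E" for i y
        using measurable_compose[OF measurable_Pair2'[of y borel] k_meas[OF that]]
        by (simp add: measurable_cong_sets[OF sets_Q refl])
      show "(\<integral>\<^sup>+u. k i u y \<partial>Q i) \<le> c" if "i \<in> E" for i y
      proof -
        have k_y: "(\<lambda>u. k i u y) \<in> borel_measurable borel"
          using measurable_compose[OF measurable_Pair2'[of y borel] k_meas[OF that]] by simp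
        have "(\<integral>\<^sup>+u. k i u y \<partial>Q i) = (\<integral>\<^sup>+\<omega>. k i (X' i \<omega>) y \<partial>M)"
          unfolding Q_def using k_y by (simp add: nn_integral_distr[OF X'_meas])
        also have "\<dots> = (\<integral>\<^sup>+\<omega>. k i (X i \<omega>) y \<partial>M)" using that F(2) by (auto simp: X'_def)
        finally show ?thesis using k_bd[OF that] by simp
      qed
      show "h x = h x'" if "\<And>i. i \<in> F - E \<Longrightarrow> x i = x' i" for x x'
        using that by (rule h_dep)
    qed (use F finite_subset[OF F(2,1)] in auto)
  qed
  finally show ?thesis .
qed


subsection \<open>Tail bound for one support, split and net point\<close>

lemma (in prob_space) exp_moment_tail_bound:
  assumes S_meas: "S \<in> borel_measurable M" and c: "0 \<le> c"
    and moment: "(\<integral>\<^sup>+\<omega>. ennreal (exp (S \<omega>)) \<partial>M) \<le> ennreal c"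
  shows "prob {\<omega>\<in>space M. L \<le> S \<omega>} \<le> c * exp (- L)"
proof -
  have "emeasure M {\<omega>\<in>space M. L \<le> S \<omega>}
      \<le> ennreal (exp (- 1 * L)) * (\<integral>\<^sup>+\<omega>. ennreal (exp (1 * S \<omega>)) * indicator (space M) \<omega> \<partial>M)"
    using S_meas by (intro Chernoff_ineq_nn_integral_ge) auto
  also have "(\<integral>\<^sup>+\<omega>. ennreal (exp (1 * S \<omega>)) * indicator (space M) \<omega> \<partial>M) = (\<integral>\<^sup>+\<omega>. ennreal (exp (S \<omega>)) \<partial>M)"
    by (intro nn_integral_cong) simp
  also have "ennreal (exp (- 1 * L)) * \<dots> \<le> ennreal (exp (- L)) * ennreal c"
    using moment by (simp add: mult_left_mono)
  also have "\<dots> = ennreal (c * exp (- L))" by (simp add: ennreal_mult'' mult.commute)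
  finally show ?thesis using c by (simp add: measure_def enn2real_leI)
qed

text \<open>Decoupling for a single triple: for fixed \<open>F\<close>, \<open>E \<subseteq> F\<close> and coefficients \<open>|z j| \<le> \<alpha>\<close>, the
  decoupled sum normalised by \<open>\<psi> \<alpha> |\<Sum>\<^sub>j\<^sub>\<in>\<^sub>F\<^sub>-\<^sub>E z\<^sub>j X\<^sub>j|\<close> has exponential moment at most \<open>2^|E|\<close>:
  its exponential is a product over \<open>i \<in> E\<close> of factors that only involve \<open>X\<^sub>i\<close> and the
  variables \<open>X\<^sub>j\<close>, \<open>j \<in> F - E\<close>.\<close>

lemma decoupled_sum_exp_moment:
  fixes X :: "nat \<Rightarrow> 'a \<Rightarrow> 'b::euclidean_space"
  assumes P: "prob_space M"
    and indep: "prob_space.indep_vars M (\<lambda>_. borel) X F" and F: "finite F" "E \<subseteq> F"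
    and psi: "\<psi> > 0"
    and psi_bd: "\<And>i u. i \<in> F \<Longrightarrow> norm u = 1 \<Longrightarrow> psi1_norm M (\<lambda>\<omega>. X i \<omega> \<bullet> u) \<le> ereal \<psi>"
    and alpha: "\<alpha> > 0" and z: "\<And>j. \<bar>z j\<bar> \<le> \<alpha>"
  shows "(\<integral>\<^sup>+\<omega>. ennreal (exp (decoupled_sum X F E z \<omega> / (\<psi> * \<alpha> * norm (\<Sum>j\<in>F - E. z j *\<^sub>R X j \<omega>))))
      \<partial>M) \<le> ennreal (2 ^ card E)"
proof -
  define k where "k i u y = ennreal (exp (\<bar>(z i *\<^sub>R u) \<bullet> y\<bar> / (\<psi> * \<alpha> * norm y)))"
    for i u and y :: 'b
  define h where "h x = (\<Sum>j\<in>F - E. z j *\<^sub>R x j)" for x :: "nat \<Rightarrow> 'b"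
  have "(\<integral>\<^sup>+\<omega>. (\<Prod>i\<in>E. k i (X i \<omega>) (h (\<lambda>j\<in>F. X j \<omega>))) \<partial>M) \<le> 2 ^ card E"
  proof (rule prob_space.indep_decoupled_product_le[OF P indep F])
    show "case_prod (k i) \<in> borel_measurable (borel \<Otimes>\<^sub>M borel)" for i
      unfolding k_def by measurable
    show "h \<in> borel_measurable (\<Pi>\<^sub>M i\<in>F. borel)"
      unfolding h_def
      by (intro borel_measurable_sum borel_measurable_scaleR borel_measurable_const
          measurable_component_singleton) auto
    show "h x = h x'" if "\<And>i. i \<in> F - E \<Longrightarrow> x i = x' i" for x x'
      unfolding h_def using that by (intro sum.cong) auto
    show "(\<integral>\<^sup>+\<omega>. k i (X i \<omega>) y \<partial>M) \<le> 2" if "i \<in> E" for i y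
      using that F(2) unfolding k_def
      by (intro scaled_projection_exp_moment[OF P _ _ psi alpha z] psi_bd)
        (auto simp: prob_space.indep_vars_def[OF P] indep[unfolded prob_space.indep_vars_def[OF P]])
  qed
  moreover have "h (\<lambda>j\<in>F. X j \<omega>) = (\<Sum>j\<in>F - E. z j *\<^sub>R X j \<omega>)" for \<omega>
    unfolding h_def by (intro sum.cong) auto
  moreover have "ennreal (exp (decoupled_sum X F E z \<omega> / (\<psi> * \<alpha> * norm (\<Sum>j\<in>F - E. z j *\<^sub>R X j \<omega>))))
      = (\<Prod>i\<in>E. k i (X i \<omega>) (\<Sum>j\<in>F - E. z j *\<^sub>R X j \<omega>))" for \<omega>
    using finite_subset[OF F(2,1)]
    by (simp add: k_def decoupled_sum_def prod_ennreal exp_sum sum_divide_distrib)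
  moreover have "ennreal (2 ^ card E) = 2 ^ card E"
    by (metis ennreal_numeral ennreal_power zero_le_numeral)
  ultimately show ?thesis by simp
qed

lemma decoupled_sum_tail_bound:
  fixes X :: "nat \<Rightarrow> 'a \<Rightarrow> 'b::euclidean_space"
  assumes P: "prob_space M"
    and indep: "prob_space.indep_vars M (\<lambda>_. borel) X F" and F: "finite F" "E \<subseteq> F"
    and psi: "\<psi> > 0"
    and psi_bd: "\<And>i u. i \<in> F \<Longrightarrow> norm u = 1 \<Longrightarrow> psi1_norm M (\<lambda>\<omega>. X i \<omega> \<bullet> u) \<le> ereal \<psi>"
    and alpha: "\<alpha> > 0" and z: "\<And>j. \<bar>z j\<bar> \<le> \<alpha>"
  shows "measure M {\<omega>\<in>space M. decoupled_sum X F E z \<omega> > \<psi> * \<alpha> * L * norm (\<Sum>j\<in>F - E. z j *\<^sub>R X j \<omega>)}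
    \<le> 2 ^ card E * exp (- L)"
proof -
  interpret prob_space M by fact
  define Y where "Y \<omega> = (\<Sum>j\<in>F - E. z j *\<^sub>R X j \<omega>)" for \<omega>
  define S where "S \<omega> = decoupled_sum X F E z \<omega> / (\<psi> * \<alpha> * norm (Y \<omega>))" for \<omega>
  have [measurable]: "X i \<in> borel_measurable M" if "i \<in> F" for i
    using indep that unfolding indep_vars_def by auto
  have [measurable]: "Y \<in> borel_measurable M"
    unfolding Y_def using F by (intro borel_measurable_sum borel_measurable_scaleR) auto
  have S_meas: "S \<in> borel_measurable M"
    unfolding S_def decoupled_sum_def Y_def[symmetric] by measurable (use F in auto)
  have "{\<omega>\<in>space M. decoupled_sum X F E z \<omega> > \<psi> * \<alpha> * L * norm (Y \<omega>)} \<subseteq> {\<omega>\<in>space M. L \<le> S \<omega>}"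
  proof safe
    fix \<omega> assume big: "decoupled_sum X F E z \<omega> > \<psi> * \<alpha> * L * norm (Y \<omega>)"
    then have "Y \<omega> \<noteq> 0" by (auto simp: decoupled_sum_def Y_def)
    then have "\<psi> * \<alpha> * norm (Y \<omega>) > 0" using psi alpha by simp
    with big show "L \<le> S \<omega>" unfolding S_def by (simp add: pos_le_divide_eq mult_ac)
  qed
  then have "measure M {\<omega>\<in>space M. decoupled_sum X F E z \<omega> > \<psi> * \<alpha> * L * norm (Y \<omega>)}
      \<le> measure M {\<omega>\<in>space M. L \<le> S \<omega>}"
    using S_meas by (intro finite_measure_mono) measurable
  also have "\<dots> \<le> 2 ^ card E * exp (- L)"
    using decoupled_sum_exp_moment[OF P indep F psi psi_bd alpha z]
    by (intro exp_moment_tail_bound S_meas) (simp_all add: S_def Y_def)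
  finally show ?thesis unfolding Y_def .
qed


subsection \<open>The sparse norm \<open>A\<^sub>m\<close>\<close>

text \<open>The set whose supremum defines \<open>A\<^sub>m\<close> is bounded by \<open>\<Sum>\<^sub>j |X\<^sub>j|\<close>, since unit vectors have
  coordinates of modulus at most 1.\<close>

lemma A_sparse_values_bdd:
  "bdd_above {norm (\<Sum>j\<in>{1..N}. z j *\<^sub>R X j \<omega>) | z.
      (\<forall>j. j \<notin> {1..N} \<longrightarrow> z j = 0) \<and> enorm_on {1..N} z = 1 \<and> card {j\<in>{1..N}. z j \<noteq> 0} \<le> m}"
proof (rule bdd_aboveI, safe)
  fix z :: "nat \<Rightarrow> real" assume z1: "enorm_on {1..N} z = 1"
  have z_le: "\<bar>z j\<bar> \<le> 1" if "j \<in> {1..N}" for j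
  proof -
    have "(z j)\<^sup>2 \<le> (\<Sum>i\<in>{1..N}. (z i)\<^sup>2)" using that by (intro member_le_sum) auto
    also have "\<dots> = 1" using z1 unfolding enorm_on_def by simp
    finally show ?thesis by (simp add: abs_square_le_1)
  qed
  have "norm (\<Sum>j\<in>{1..N}. z j *\<^sub>R X j \<omega>) \<le> (\<Sum>j\<in>{1..N}. norm (z j *\<^sub>R X j \<omega>))" by (rule norm_sum)
  also have "\<dots> \<le> (\<Sum>j\<in>{1..N}. norm (X j \<omega>))"
    using z_le by (intro sum_mono) (auto intro!: mult_left_le_one_le)
  finally show "norm (\<Sum>j\<in>{1..N}. z j *\<^sub>R X j \<omega>) \<le> (\<Sum>j\<in>{1..N}. norm (X j \<omega>))" .
qed

lemma unit_sparse_combination_le_A_sparse: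
  assumes "\<And>j. j \<notin> {1..N} \<Longrightarrow> v j = 0" "enorm_on {1..N} v = 1" "card {j\<in>{1..N}. v j \<noteq> 0} \<le> m"
  shows "norm (\<Sum>j\<in>{1..N}. v j *\<^sub>R X j \<omega>) \<le> A_sparse N X m \<omega>"
  unfolding A_sparse_def using assms by (intro cSup_upper A_sparse_values_bdd) blast

text \<open>\<open>A\<^sub>m \<ge> 0\<close>, witnessed by the first unit vector.\<close>

lemma A_sparse_nonneg:
  assumes m: "1 \<le> m" "m \<le> N"
  shows "0 \<le> A_sparse N X m \<omega>"
proof -
  define e where "e j = (if j = 1 then 1 else (0::real))" for j :: nat
  have "(\<Sum>j\<in>{1..N}. (e j)\<^sup>2) = (\<Sum>j\<in>{1..N}. if j = 1 then 1 else 0)"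
    by (intro sum.cong) (auto simp: e_def)
  also have "\<dots> = 1" using m by simp
  finally have "(\<Sum>j\<in>{1..N}. (e j)\<^sup>2) = 1" .
  moreover have "{j\<in>{1..N}. e j \<noteq> 0} = {1}" using m by (auto simp: e_def)
  ultimately have "norm (\<Sum>j\<in>{1..N}. e j *\<^sub>R X j \<omega>) \<le> A_sparse N X m \<omega>"
    using m by (intro unit_sparse_combination_le_A_sparse) (auto simp: e_def enorm_on_def)
  then show ?thesis by (meson norm_ge_zero order_trans)
qed

text \<open>Every \<open>m\<close>-sparse vector supported in \<open>{1..N}\<close> with norm at most 1 is bounded by \<open>A\<^sub>m\<close>
  (rescale it to the unit sphere).\<close>

lemma norm_sparse_combination_le_A_sparse:
  fixes X :: "nat \<Rightarrow> 'a \<Rightarrow> real^'n::finite"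
  assumes m: "1 \<le> m" "m \<le> N"
    and w_supp: "\<And>j. j \<notin> {1..N} \<Longrightarrow> w j = 0" and w_norm: "enorm_on {1..N} w \<le> 1"
    and w_sparse: "card {j\<in>{1..N}. w j \<noteq> 0} \<le> m"
  shows "norm (\<Sum>j\<in>{1..N}. w j *\<^sub>R X j \<omega>) \<le> A_sparse N X m \<omega>"
proof -
  define r where "r = enorm_on {1..N} w"
  have r_sq: "r\<^sup>2 = (\<Sum>j\<in>{1..N}. (w j)\<^sup>2)" unfolding r_def enorm_on_def by (simp add: sum_nonneg)
  show ?thesis
  proof (cases "r = 0")
    case True
    then have "\<forall>j\<in>{1..N}. w j = 0" using r_sq by (simp add: sum_nonneg_eq_0_iff)
    then show ?thesis using A_sparse_nonneg[OF m] by simp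
  next
    case False
    then have r: "r > 0" unfolding r_def enorm_on_def by (simp add: sum_nonneg order_less_le)
    define v where "v j = w j / r" for j
    have "(\<Sum>j\<in>{1..N}. (v j)\<^sup>2) = (\<Sum>j\<in>{1..N}. (w j)\<^sup>2) / r\<^sup>2"
      by (simp add: v_def power_divide sum_divide_distrib)
    also have "\<dots> = r\<^sup>2 / r\<^sup>2" by (simp only: r_sq)
    also have "\<dots> = 1" using r by simp
    finally have "(\<Sum>j\<in>{1..N}. (v j)\<^sup>2) = 1" .
    moreover have "{j\<in>{1..N}. v j \<noteq> 0} = {j\<in>{1..N}. w j \<noteq> 0}" using r by (auto simp: v_def)
    ultimately have v_le: "norm (\<Sum>j\<in>{1..N}. v j *\<^sub>R X j \<omega>) \<le> A_sparse N X m \<omega>"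
      using w_supp w_sparse
      by (intro unit_sparse_combination_le_A_sparse) (auto simp: v_def enorm_on_def)
    have "(\<Sum>j\<in>{1..N}. w j *\<^sub>R X j \<omega>) = r *\<^sub>R (\<Sum>j\<in>{1..N}. v j *\<^sub>R X j \<omega>)"
      using r by (simp add: v_def scaleR_sum_right)
    then have "norm (\<Sum>j\<in>{1..N}. w j *\<^sub>R X j \<omega>) = r * norm (\<Sum>j\<in>{1..N}. v j *\<^sub>R X j \<omega>)"
      using r by simp
    also have "\<dots> \<le> 1 * A_sparse N X m \<omega>"
      using v_le r w_norm A_sparse_nonneg[OF m] unfolding r_def by (intro mult_mono) auto
    finally show ?thesis by simp
  qed
qed

lemma norm_partial_sum_le_A_sparse:
  fixes X :: "nat \<Rightarrow> 'a \<Rightarrow> real^'n::finite"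
  assumes m: "1 \<le> m" "m \<le> N" and F: "F \<subseteq> {1..N}" "card F \<le> m" "D \<subseteq> F"
    and z: "z \<in> ball_box N \<alpha> F"
  shows "norm (\<Sum>j\<in>D. z j *\<^sub>R X j \<omega>) \<le> A_sparse N X m \<omega>"
proof -
  define w where "w j = (if j \<in> D then z j else 0)" for j
  have "(\<Sum>j\<in>{1..N}. w j *\<^sub>R X j \<omega>) = (\<Sum>j\<in>D. w j *\<^sub>R X j \<omega>)"
    using F by (intro sum.mono_neutral_right) (auto simp: w_def)
  also have "\<dots> = (\<Sum>j\<in>D. z j *\<^sub>R X j \<omega>)" by (intro sum.cong) (auto simp: w_def)
  finally have "(\<Sum>j\<in>{1..N}. w j *\<^sub>R X j \<omega>) = (\<Sum>j\<in>D. z j *\<^sub>R X j \<omega>)" .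
  moreover have "norm (\<Sum>j\<in>{1..N}. w j *\<^sub>R X j \<omega>) \<le> A_sparse N X m \<omega>"
  proof (rule norm_sparse_combination_le_A_sparse[OF m])
    show "w j = 0" if "j \<notin> {1..N}" for j using that F by (auto simp: w_def)
    have "enorm_on {1..N} w \<le> enorm_on {1..N} z"
      unfolding enorm_on_def by (intro real_sqrt_le_mono sum_mono) (auto simp: w_def)
    then show "enorm_on {1..N} w \<le> 1" using z by (simp add: ball_box_def)
    have "card {j\<in>{1..N}. w j \<noteq> 0} \<le> card F"
      using F finite_subset[OF F(1)] by (intro card_mono) (auto simp: w_def)
    then show "card {j\<in>{1..N}. w j \<noteq> 0} \<le> m" using F(2) by linarith
  qed
  ultimately show ?thesis by simp
qed


subsection \<open>Reduction to a finite family of events\<close>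

lemma small_subsets_finite: "finite {F. F \<subseteq> {1..N::nat} \<and> card F \<le> m}"
  by (rule finite_subset[of _ "Pow {1..N}"]) auto

lemma decoupled_sum_values_finite:
  assumes net_fin: "\<And>E. E \<subseteq> {1..N} \<Longrightarrow> finite (Net E)"
  shows "finite {decoupled_sum X F E z \<omega> | F E z. F \<subseteq> {1..N} \<and> card F \<le> m \<and> E \<subseteq> F \<and> z \<in> Net F}"
proof -
  define Fs where "Fs = {F. F \<subseteq> {1..N} \<and> card F \<le> m}"
  have triples_fin: "finite (SIGMA F:Fs. Pow F \<times> Net F)"
  proof (rule finite_SigmaI)
    show "finite Fs" unfolding Fs_def by (rule small_subsets_finite)
    fix F assume "F \<in> Fs"
    then have F: "F \<subseteq> {1..N}" unfolding Fs_def by simp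
    show "finite (Pow F \<times> Net F)"
      using net_fin[OF F] finite_subset[OF F finite_atLeastAtMost] by simp
  qed
  have "{decoupled_sum X F E z \<omega> | F E z. F \<subseteq> {1..N} \<and> card F \<le> m \<and> E \<subseteq> F \<and> z \<in> Net F}
      \<subseteq> (\<lambda>(F, E, z). decoupled_sum X F E z \<omega>) ` (SIGMA F:Fs. Pow F \<times> Net F)"
  proof safe
    fix F E z assume "F \<subseteq> {1..N}" "card F \<le> m" "E \<subseteq> F" "z \<in> Net F"
    then show "decoupled_sum X F E z \<omega> \<in> (\<lambda>(F, E, z). decoupled_sum X F E z \<omega>) ` (SIGMA F:Fs. Pow F \<times> Net F)"
      unfolding Fs_def by (intro image_eqI[of _ _ "(F, E, z)"]) auto
  qed
  then show ?thesis by (rule finite_surj[OF triples_fin])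
qed

text \<open>Reduction to finitely many events: if the supremum of the decoupled sums exceeds
  \<open>t A\<^sub>m\<close> with \<open>t \<ge> 0\<close>, then one triple already exceeds \<open>t |\<Sum>\<^sub>j\<^sub>\<in>\<^sub>F\<^sub>-\<^sub>E z\<^sub>j X\<^sub>j|\<close>, because this
  norm is at most \<open>A\<^sub>m\<close>.\<close>

lemma exceeding_event_subset:
  fixes X :: "nat \<Rightarrow> 'a \<Rightarrow> real^'n::finite" and \<Omega> :: "'a set"
  assumes m: "1 \<le> m" "m \<le> N" and t: "t \<ge> 0"
    and net_sub: "\<And>E. E \<subseteq> {1..N} \<Longrightarrow> Net E \<subseteq> ball_box N \<alpha> E"
    and net_fin: "\<And>E. E \<subseteq> {1..N} \<Longrightarrow> finite (Net E)"
    and net_ne: "z\<^sub>0 \<in> Net {}"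
  shows "{\<omega>\<in>\<Omega>. t * A_sparse N X m \<omega> < Sup {decoupled_sum X F E z \<omega> | F E z.
                F \<subseteq> {1..N} \<and> card F \<le> m \<and> E \<subseteq> F \<and> z \<in> Net F}}
    \<subseteq> (\<Union>F\<in>{F. F \<subseteq> {1..N} \<and> card F \<le> m}. \<Union>E\<in>Pow F. \<Union>z\<in>Net F.
          {\<omega>\<in>\<Omega>. t * norm (\<Sum>j\<in>F - E. z j *\<^sub>R X j \<omega>) < decoupled_sum X F E z \<omega>})"
proof safe
  fix \<omega> assume \<omega>: "\<omega> \<in> \<Omega>" and big: "t * A_sparse N X m \<omega> < Sup {decoupled_sum X F E z \<omega> | F E z.
                F \<subseteq> {1..N} \<and> card F \<le> m \<and> E \<subseteq> F \<and> z \<in> Net F}"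
  let ?T = "{decoupled_sum X F E z \<omega> | F E z. F \<subseteq> {1..N} \<and> card F \<le> m \<and> E \<subseteq> F \<and> z \<in> Net F}"
  have "decoupled_sum X {} {} z\<^sub>0 \<omega> \<in> ?T" using net_ne by force
  then have T_ne: "?T \<noteq> {}" by blast
  have "\<exists>s\<in>?T. t * A_sparse N X m \<omega> < s"
    using less_cSup_iff[OF T_ne bdd_above_finite[OF decoupled_sum_values_finite[OF net_fin]]] big
    by (rule iffD1)
  then obtain F E z where FEz: "F \<subseteq> {1..N}" "card F \<le> m" "E \<subseteq> F" "z \<in> Net F"
    and exceeds: "t * A_sparse N X m \<omega> < decoupled_sum X F E z \<omega>"
    by blast
  have "norm (\<Sum>j\<in>F - E. z j *\<^sub>R X j \<omega>) \<le> A_sparse N X m \<omega>"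
    using FEz net_sub by (intro norm_partial_sum_le_A_sparse[OF m]) auto
  then have "t * norm (\<Sum>j\<in>F - E. z j *\<^sub>R X j \<omega>) < decoupled_sum X F E z \<omega>"
    using exceeds t by (meson mult_left_mono order_le_less_trans)
  with FEz \<omega> show "\<omega> \<in> (\<Union>F\<in>{F. F \<subseteq> {1..N} \<and> card F \<le> m}. \<Union>E\<in>Pow F. \<Union>z\<in>Net F.
          {\<omega>\<in>\<Omega>. t * norm (\<Sum>j\<in>F - E. z j *\<^sub>R X j \<omega>) < decoupled_sum X F E z \<omega>})"
    by blast
qed

lemma (in finite_measure) measure_UN3_le:
  assumes "finite A" "\<And>a. a \<in> A \<Longrightarrow> finite (B a)" "\<And>a b. a \<in> A \<Longrightarrow> b \<in> B a \<Longrightarrow> finite (C a b)"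
    and S: "\<And>a b c. a \<in> A \<Longrightarrow> b \<in> B a \<Longrightarrow> c \<in> C a b \<Longrightarrow> S a b c \<in> sets M"
  shows "measure M (\<Union>a\<in>A. \<Union>b\<in>B a. \<Union>c\<in>C a b. S a b c)
    \<le> (\<Sum>a\<in>A. \<Sum>b\<in>B a. \<Sum>c\<in>C a b. measure M (S a b c))"
proof -
  have "measure M (\<Union>a\<in>A. \<Union>b\<in>B a. \<Union>c\<in>C a b. S a b c)
      \<le> (\<Sum>a\<in>A. measure M (\<Union>b\<in>B a. \<Union>c\<in>C a b. S a b c))"
    using assms by (intro measure_UNION_le sets.finite_UN) auto
  also have "\<dots> \<le> (\<Sum>a\<in>A. \<Sum>b\<in>B a. measure M (\<Union>c\<in>C a b. S a b c))"
    using assms by (intro sum_mono measure_UNION_le sets.finite_UN) auto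
  also have "\<dots> \<le> (\<Sum>a\<in>A. \<Sum>b\<in>B a. \<Sum>c\<in>C a b. measure M (S a b c))"
    using assms by (intro sum_mono measure_UNION_le) auto
  finally show ?thesis .
qed


lemma tail_events_union_bound:
  fixes X :: "nat \<Rightarrow> 'a \<Rightarrow> 'b::euclidean_space"
  assumes P: "prob_space M"
    and indep: "prob_space.indep_vars M (\<lambda>_. borel) X {1..N}"
    and psi: "\<psi> > 0"
    and psi_bd: "\<And>i u. i \<in> {1..N} \<Longrightarrow> norm u = 1 \<Longrightarrow> psi1_norm M (\<lambda>\<omega>. X i \<omega> \<bullet> u) \<le> ereal \<psi>"
    and alpha: "\<alpha> > 0"
    and net_sub: "\<And>E. E \<subseteq> {1..N} \<Longrightarrow> Net E \<subseteq> ball_box N \<alpha> E"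
    and net_fin: "\<And>E. E \<subseteq> {1..N} \<Longrightarrow> finite (Net E)"
    and S: "S \<subseteq> (\<Union>F\<in>{F. F \<subseteq> {1..N} \<and> card F \<le> m}. \<Union>E\<in>Pow F. \<Union>z\<in>Net F.
          {\<omega>\<in>space M. \<psi> * \<alpha> * L * norm (\<Sum>j\<in>F - E. z j *\<^sub>R X j \<omega>) < decoupled_sum X F E z \<omega>})"
  shows "measure M S \<le> (\<Sum>F\<in>{F. F \<subseteq> {1..N} \<and> card F \<le> m}. \<Sum>E\<in>Pow F. \<Sum>z\<in>Net F. 2 ^ card E * exp (- L))"
proof -
  interpret prob_space M by fact
  define Fs where "Fs = {F. F \<subseteq> {1..N} \<and> card F \<le> m}"
  define B where "B F E z = {\<omega>\<in>space M.
    \<psi> * \<alpha> * L * norm (\<Sum>j\<in>F - E. z j *\<^sub>R X j \<omega>) < decoupled_sum X F E z \<omega>}" for F E z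
  have Fs_fin: "finite Fs" unfolding Fs_def by (rule small_subsets_finite)
  have Fs: "F \<subseteq> {1..N}" "finite F" if "F \<in> Fs" for F
    using that unfolding Fs_def by (auto intro: finite_subset[OF _ finite_atLeastAtMost])
  have B_sets: "B F E z \<in> sets M" if "F \<in> Fs" "E \<subseteq> F" for F E z
  proof -
    have [measurable]: "X i \<in> borel_measurable M" if "i \<in> F" for i
      using indep that Fs(1)[OF \<open>F \<in> Fs\<close>] unfolding indep_vars_def by auto
    show ?thesis unfolding B_def decoupled_sum_def by measurable (use that in auto)
  qed
  have "measure M S \<le> measure M (\<Union>F\<in>Fs. \<Union>E\<in>Pow F. \<Union>z\<in>Net F. B F E z)"
    using S B_sets Fs_fin net_fin Fs unfolding Fs_def[symmetric] B_def[symmetric]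
    by (intro finite_measure_mono sets.finite_UN) auto
  also have "\<dots> \<le> (\<Sum>F\<in>Fs. \<Sum>E\<in>Pow F. \<Sum>z\<in>Net F. measure M (B F E z))"
    using B_sets Fs_fin net_fin Fs by (intro measure_UN3_le) auto
  also have "\<dots> \<le> (\<Sum>F\<in>Fs. \<Sum>E\<in>Pow F. \<Sum>z\<in>Net F. 2 ^ card E * exp (- L))"
  proof (intro sum_mono)
    fix F E z assume F: "F \<in> Fs" and E: "E \<in> Pow F" and z: "z \<in> Net F"
    have "\<bar>z j\<bar> \<le> \<alpha>" for j using net_sub[OF Fs(1)[OF F]] z by (auto simp: ball_box_def)
    then show "measure M (B F E z) \<le> 2 ^ card E * exp (- L)"
      unfolding B_def using E Fs[OF F]
      by (intro decoupled_sum_tail_bound[OF P indep_vars_subset[OF indep] _ _ psi _ alpha])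
        (auto intro!: psi_bd)
  qed
  finally show ?thesis unfolding Fs_def .
qed


subsection \<open>Counting\<close>

lemma sum_Pow_power_card:
  fixes x :: "'a::comm_semiring_1"
  assumes "finite A"
  shows "(\<Sum>E\<in>Pow A. x ^ card E) = (1 + x) ^ card A"
  using prod_add[OF assms, of "\<lambda>_. x" "\<lambda>_. 1"] assms
  by (simp add: add.commute)

text \<open>The number of subsets of \<open>{1..N}\<close> with at most \<open>m\<close> elements is at most \<open>(e N / m)^m\<close>:
  weight each subset \<open>F\<close> by \<open>(N/m)^m (m/N)^|F| \<ge> 1\<close> and sum over all subsets.\<close>

lemma card_small_subsets:
  assumes m: "1 \<le> m" "m \<le> N"
  shows "real (card {F. F \<subseteq> {1..N} \<and> card F \<le> m}) \<le> (exp 1 * real N / real m) ^ m"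
proof -
  define Fs where "Fs = {F. F \<subseteq> {1..N::nat} \<and> card F \<le> m}"
  define x where "x = real m / real N"
  have x: "0 < x" "x \<le> 1" using m by (auto simp: x_def)
  have Fs_sub: "Fs \<subseteq> Pow {1..N}" unfolding Fs_def by auto
  have "real (card Fs) = (\<Sum>F\<in>Fs. 1)" by simp
  also have "\<dots> \<le> (\<Sum>F\<in>Fs. (1 / x) ^ m * x ^ card F)"
  proof (intro sum_mono)
    fix F assume "F \<in> Fs"
    then have "x ^ m \<le> x ^ card F" using x unfolding Fs_def by (intro power_decreasing) auto
    then show "1 \<le> (1 / x) ^ m * x ^ card F" using x by (simp add: power_divide field_simps)
  qed
  also have "\<dots> \<le> (\<Sum>F\<in>Pow {1..N}. (1 / x) ^ m * x ^ card F)"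
    using Fs_sub x by (intro sum_mono2) auto
  also have "\<dots> = (1 / x) ^ m * (1 + x) ^ N"
    by (simp add: sum_Pow_power_card flip: sum_distrib_left)
  also have "\<dots> \<le> (1 / x) ^ m * exp x ^ N"
    using x by (intro mult_left_mono power_mono exp_ge_add_one_self) auto
  also have "exp x ^ N = exp 1 ^ m"
    using m by (simp add: x_def flip: exp_of_nat_mult)
  also have "(1 / x) ^ m * exp 1 ^ m = (exp 1 * real N / real m) ^ m"
    using m by (simp add: x_def mult_ac flip: power_mult_distrib)
  finally show ?thesis unfolding Fs_def .
qed

text \<open>The total weight of the union bound: summing \<open>2^|E| e^(-L)\<close> over supports \<open>|F| \<le> m\<close>,
  splits \<open>E \<subseteq> F\<close> and net points gives at most \<open>(eN/m)^m (9/\<epsilon>)^m e^(-L) \<le> e^(-L/2)\<close>.\<close>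

lemma union_bound_weight:
  assumes m: "1 \<le> m" "m \<le> N" and eps: "0 < \<epsilon>" "\<epsilon> \<le> 1"
    and L: "L \<ge> 2 * real m * ln (12 * exp 1 * real N / (real m * \<epsilon>))"
    and net_card: "\<And>E. E \<subseteq> {1..N} \<Longrightarrow> real (card (Net E)) \<le> (3 / \<epsilon>) ^ card E"
  shows "(\<Sum>F\<in>{F. F \<subseteq> {1..N} \<and> card F \<le> m}. \<Sum>E\<in>Pow F. \<Sum>z\<in>Net F. 2 ^ card E * exp (- L))
    \<le> exp (- L / 2)"
proof -
  define Fs where "Fs = {F. F \<subseteq> {1..N} \<and> card F \<le> m}"
  define K where "K = 12 * exp 1 * real N / (real m * \<epsilon>)"
  have K: "9 * exp 1 * real N / (real m * \<epsilon>) \<le> K" "0 < K"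
    using m eps unfolding K_def by (auto intro!: divide_right_mono)
  have per_support: "(\<Sum>E\<in>Pow F. \<Sum>z\<in>Net F. 2 ^ card E * exp (- L)) \<le> (9 / \<epsilon>) ^ m * exp (- L)"
    if "F \<in> Fs" for F
  proof -
    have F: "F \<subseteq> {1..N}" "finite F" "card F \<le> m"
      using that unfolding Fs_def by (auto intro: finite_subset[OF _ finite_atLeastAtMost])
    have "(\<Sum>E\<in>Pow F. \<Sum>z\<in>Net F. 2 ^ card E * exp (- L))
        = real (card (Net F)) * exp (- L) * (\<Sum>E\<in>Pow F. 2 ^ card E)"
      by (simp add: sum_distrib_left mult_ac)
    also have "\<dots> = real (card (Net F)) * 3 ^ card F * exp (- L)"
      using sum_Pow_power_card[OF F(2), of "2::real"] by simp
    also have "\<dots> \<le> (3 / \<epsilon>) ^ card F * 3 ^ card F * exp (- L)"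
      using net_card[OF F(1)] by (intro mult_right_mono) auto
    also have "\<dots> = (9 / \<epsilon>) ^ card F * exp (- L)"
      by (simp flip: power_mult_distrib)
    also have "\<dots> \<le> (9 / \<epsilon>) ^ m * exp (- L)"
      using eps F(3) by (intro mult_right_mono power_increasing) auto
    finally show ?thesis .
  qed
  have "(\<Sum>F\<in>Fs. \<Sum>E\<in>Pow F. \<Sum>z\<in>Net F. 2 ^ card E * exp (- L)) \<le> real (card Fs) * ((9 / \<epsilon>) ^ m * exp (- L))"
    using sum_mono[OF per_support] by simp
  also have "\<dots> \<le> (exp 1 * real N / real m) ^ m * ((9 / \<epsilon>) ^ m * exp (- L))"
    using card_small_subsets[OF m] eps unfolding Fs_def by (intro mult_right_mono) auto
  also have "\<dots> = (9 * exp 1 * real N / (real m * \<epsilon>)) ^ m * exp (- L)"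
    by (simp add: mult_ac flip: power_mult_distrib)
  also have "\<dots> \<le> K ^ m * exp (- L)"
    using m eps K by (intro mult_right_mono power_mono) auto
  also have "K ^ m = exp (real m * ln K)" using K(2) by (simp add: exp_of_nat_mult)
  also have "exp (real m * ln K) * exp (- L) \<le> exp (L / 2) * exp (- L)"
    using L unfolding K_def[symmetric] by simp
  also have "\<dots> = exp (- L / 2)" by (simp flip: exp_add)
  finally show ?thesis unfolding Fs_def .
qed


text \<open>The threshold \<open>L\<close> of the theorem is nonnegative, since \<open>12 e N / (m \<epsilon>) \<ge> 1\<close>.\<close>

lemma threshold_nonneg:
  assumes m: "1 \<le> m" "m \<le> N" and eps: "0 < \<epsilon>" "\<epsilon> \<le> 1"
    and L: "L \<ge> 2 * real m * ln (12 * exp 1 * real N / (real m * \<epsilon>))"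
  shows "L \<ge> 0"
proof -
  have "real m * \<epsilon> \<le> real N * 1" using m eps by (intro mult_mono) auto
  also have "\<dots> \<le> 12 * exp 1 * real N"
    using exp_ge_add_one_self[of 1] by (simp add: mult_le_cancel_right1)
  finally have "1 \<le> 12 * exp 1 * real N / (real m * \<epsilon>)" using m eps by simp
  then show ?thesis
    using L ln_ge_zero by (meson mult_nonneg_nonneg of_nat_0_le_iff order_trans zero_le_numeral)
qed


theorem mainTheorem3:
  fixes M :: "'a measure" and X :: "nat \<Rightarrow> 'a \<Rightarrow> real^'n::finite"
    and N m :: nat and \<psi> \<epsilon> \<alpha> L :: real
    and Net :: "nat set \<Rightarrow> (nat \<Rightarrow> real) set"
  assumes "prob_space M"
    and meas: "\<And>i. i \<in> {1..N} \<Longrightarrow> X i \<in> borel_measurable M"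
    and indep: "prob_space.indep_vars M (\<lambda>_. borel) X {1..N}"
    and psi_pos: "\<psi> > 0"
    and psi_bd: "\<And>i y. i \<in> {1..N} \<Longrightarrow> norm y = 1 \<Longrightarrow>
                   psi1_norm M (\<lambda>\<omega>. X i \<omega> \<bullet> y) \<le> ereal \<psi>"
    and m: "1 \<le> m" "m \<le> N"
    and eps: "0 < \<epsilon>" "\<epsilon> \<le> 1"
    and alpha: "0 < \<alpha>" "\<alpha> \<le> 1"
    and L: "L \<ge> 2 * real m * ln (12 * exp 1 * real N / (real m * \<epsilon>))"
    and net_sub: "\<And>E. E \<subseteq> {1..N} \<Longrightarrow> Net E \<subseteq> ball_box N \<alpha> E"
    and net_cover: "\<And>E w. E \<subseteq> {1..N} \<Longrightarrow> w \<in> ball_box N \<alpha> E \<Longrightarrow>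
                     \<exists>z\<in>Net E. enorm_on {1..N} (\<lambda>j. w j - z j) \<le> \<epsilon>"
    and net_fin: "\<And>E. E \<subseteq> {1..N} \<Longrightarrow> finite (Net E)"
    and net_card: "\<And>E. E \<subseteq> {1..N} \<Longrightarrow> real (card (Net E)) \<le> (3 / \<epsilon>) ^ card E"
  shows "measure M {\<omega> \<in> space M.
           Sup {\<Sum>i\<in>E. \<bar>(z i *\<^sub>R X i \<omega>) \<bullet> (\<Sum>j\<in>F - E. z j *\<^sub>R X j \<omega>)\<bar> | F E z.
                  F \<subseteq> {1..N} \<and> card F \<le> m \<and> E \<subseteq> F \<and> z \<in> Net F}
           > \<psi> * \<alpha> * L * A_sparse N X m \<omega>}
         \<le> exp (- L / 2)"
proof -
  obtain z\<^sub>0 where z\<^sub>0: "z\<^sub>0 \<in> Net {}"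
    using net_cover[of "{}" "\<lambda>_. 0"] alpha by (auto simp: ball_box_def enorm_on_def)
  have t: "0 \<le> \<psi> * \<alpha> * L" using threshold_nonneg[OF m eps L] psi_pos alpha by simp
  have "measure M {\<omega> \<in> space M. Sup {decoupled_sum X F E z \<omega> | F E z.
          F \<subseteq> {1..N} \<and> card F \<le> m \<and> E \<subseteq> F \<and> z \<in> Net F} > \<psi> * \<alpha> * L * A_sparse N X m \<omega>}
      \<le> (\<Sum>F\<in>{F. F \<subseteq> {1..N} \<and> card F \<le> m}. \<Sum>E\<in>Pow F. \<Sum>z\<in>Net F. 2 ^ card E * exp (- L))"
    by (rule tail_events_union_bound[OF \<open>prob_space M\<close> indep psi_pos psi_bd alpha(1) net_sub net_fin
          exceeding_event_subset[OF m t net_sub net_fin z\<^sub>0]])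
  also have "\<dots> \<le> exp (- L / 2)" by (rule union_bound_weight[OF m eps L net_card])
  finally show ?thesis by (simp only: decoupled_sum_def)
qed

end
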